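(* If $H$ and $G$ are graphs and $H$ is an immersion of $G$, then $\delta^{\infty}_{\rm e}(H)\leq\delta^{\infty}_{\rm e}(G)$.
   Context: All graphs are finite, undirected, loopless, may have parallel edges. Lifting two edges $ux$ and $xw$ means deleting them and adding an edge $uw$ (nothing added if $u=w$); $H$ is an immersion of $G$ if a graph isomorphic to $H$ can be obtained from a subgraph of $G$ by a sequence of liftings. $\delta^{\infty}_{\rm e}(G)$ (edge-admissibility) is the minimum, over all linear orderings $\langle v_1,\dots,v_n\rangle$ of $V(G)$, of $\max_i\lambda_i$, where $\lambda_i$ is the minimum number of edges of $G$ whose removal destroys every path from $v_i$ to $\{v_1,\dots,v_{i-1}\}$ ($\lambda_1=0$). *)

theory Defs
  imports Main "HOL-Library.Multiset"
begin

text \<open>Finite loopless multigraphs: a vertex set and a multiset of edges, each edge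
  being a 2-element set of vertices (parallel edges = multiplicity > 1).\<close>

record 'a mgraph =
  verts :: "'a set"
  edges :: "'a set multiset"

definition wf_mgraph :: "('a, 'b) mgraph_scheme \<Rightarrow> bool" where
  "wf_mgraph G \<longleftrightarrow> finite (verts G) \<and>
     (\<forall>e \<in># edges G. \<exists>u v. u \<noteq> v \<and> e = {u, v} \<and> u \<in> verts G \<and> v \<in> verts G)"

definition subgraph :: "'a mgraph \<Rightarrow> 'a mgraph \<Rightarrow> bool" where
  "subgraph S G \<longleftrightarrow> verts S \<subseteq> verts G \<and> edges S \<subseteq># edges G \<and>
     (\<forall>e \<in># edges S. e \<subseteq> verts S)"

definition lift_step :: "'a mgraph \<Rightarrow> 'a mgraph \<Rightarrow> bool" where
  "lift_step G G' \<longleftrightarrow> (\<exists>u x w. u \<noteq> x \<and> x \<noteq> w \<and>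
     {#{u, x}, {x, w}#} \<subseteq># edges G \<and>
     G' = \<lparr> verts = verts G,
            edges = edges G - {#{u, x}, {x, w}#} + (if u = w then {#} else {#{u, w}#}) \<rparr>)"

definition mgraph_iso :: "'b mgraph \<Rightarrow> 'a mgraph \<Rightarrow> bool" where
  "mgraph_iso H G \<longleftrightarrow> (\<exists>f. bij_betw f (verts H) (verts G) \<and>
     image_mset (\<lambda>e. f ` e) (edges H) = edges G)"

definition immersion :: "'b mgraph \<Rightarrow> 'a mgraph \<Rightarrow> bool" where
  "immersion H G \<longleftrightarrow> (\<exists>S L. subgraph S G \<and> lift_step\<^sup>*\<^sup>* S L \<and> mgraph_iso H L)"

definition adj :: "'a set multiset \<Rightarrow> 'a \<Rightarrow> 'a \<Rightarrow> bool" where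
  "adj E a b \<longleftrightarrow> {a, b} \<in># E"

definition connects :: "'a set multiset \<Rightarrow> 'a \<Rightarrow> 'a set \<Rightarrow> bool" where
  "connects E v S \<longleftrightarrow> (\<exists>s \<in> S. (adj E)\<^sup>*\<^sup>* v s)"

definition edge_cut :: "'a mgraph \<Rightarrow> 'a \<Rightarrow> 'a set \<Rightarrow> nat" where
  "edge_cut G v S = (LEAST k. \<exists>F. F \<subseteq># edges G \<and> size F = k \<and>
       \<not> connects (edges G - F) v S)"

text \<open>Edge-admissibility: minimum over linear orderings of the maximum lambda_i.\<close>
definition edge_adm :: "'a mgraph \<Rightarrow> nat" where
  "edge_adm G = (LEAST k. \<exists>vs. distinct vs \<and> set vs = verts G \<and>
       (\<forall>i < length vs. edge_cut G (vs ! i) (set (take i vs)) \<le> k))"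

end

theory Submission
  imports Defs
begin

text \<open>
  Each of the three operations producing an immersion does not increase the edge cuts
  \<open>\<lambda>(v, B)\<close>: a cut of \<open>G\<close> restricted to a subgraph is a cut there; a cut
  of \<open>G\<close> remains a cut after lifting \<open>ux, xw\<close> to \<open>uw\<close>, unless it meets
  \<open>ux, xw\<close>, in which case trading those cut edges for \<open>uw\<close> gives a cut that is no
  larger; and an isomorphism carries cuts to cuts. Restricting an optimal ordering of
  \<open>G\<close> to the branch vertices of \<open>H\<close> only shrinks the sets \<open>B\<close> of earlier
  vertices, which cannot increase \<open>\<lambda>\<close> either.
\<close>

lemma rtranclp_map:
  assumes "r\<^sup>*\<^sup>* a b" and "\<And>x y. r x y \<Longrightarrow> s\<^sup>*\<^sup>* (h x) (h y)"
  shows "s\<^sup>*\<^sup>* (h a) (h b)"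
  using assms(1) by induction (auto intro: rtranclp_trans assms(2))

lemma connects_empty_iff: "connects {#} v B \<longleftrightarrow> v \<in> B"
proof -
  have "(adj {#})\<^sup>*\<^sup>* a b \<longleftrightarrow> a = b" for a b :: 'a
  proof
    show "(adj {#})\<^sup>*\<^sup>* a b \<Longrightarrow> a = b"
      by (induction rule: rtranclp.induct) (auto simp: adj_def)
  qed simp
  then show ?thesis unfolding connects_def by auto
qed

lemma connects_mono:
  assumes "E1 \<subseteq># E2" and "connects E1 v B"
  shows "connects E2 v B"
proof -
  have "adj E1 \<le> adj E2" using assms(1) by (auto simp: adj_def mset_subset_eqD)
  then have "(adj E1)\<^sup>*\<^sup>* \<le> (adj E2)\<^sup>*\<^sup>*" by (rule rtranclp_mono)
  with assms(2) show ?thesis unfolding connects_def by blast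
qed

lemma connects_image_mset:
  assumes "connects E v B"
  shows "connects (image_mset (image f) E) (f v) (f ` B)"
proof -
  obtain s where "s \<in> B" and path: "(adj E)\<^sup>*\<^sup>* v s"
    using assms unfolding connects_def by blast
  have "(adj (image_mset (image f) E))\<^sup>*\<^sup>* (f a) (f b)" if "adj E a b" for a b
  proof -
    have "{f a, f b} \<in># image_mset (image f) E"
      using that unfolding adj_def by (auto intro!: image_eqI[where x = "{a, b}"])
    then have "adj (image_mset (image f) E) (f a) (f b)" unfolding adj_def .
    then show ?thesis by (rule r_into_rtranclp)
  qed
  with path have "(adj (image_mset (image f) E))\<^sup>*\<^sup>* (f v) (f s)" by (rule rtranclp_map)
  with \<open>s \<in> B\<close> show ?thesis unfolding connects_def by blast
qed

lemma edge_cut_le: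
  assumes "F \<subseteq># edges G" and "\<not> connects (edges G - F) v B"
  shows "edge_cut G v B \<le> size F"
  unfolding edge_cut_def by (rule Least_le, intro exI[of _ F]) (simp add: assms)

lemma edge_cut_attained:
  assumes "v \<notin> B"
  obtains F where "F \<subseteq># edges G" "size F = edge_cut G v B" "\<not> connects (edges G - F) v B"
proof -
  have "\<exists>k F. F \<subseteq># edges G \<and> size F = k \<and> \<not> connects (edges G - F) v B"
    using assms by (intro exI[of _ "size (edges G)"] exI[of _ "edges G"]) (simp add: connects_empty_iff)
  then have "\<exists>F. F \<subseteq># edges G \<and> size F = edge_cut G v B \<and> \<not> connects (edges G - F) v B"
    unfolding edge_cut_def by (rule LeastI_ex)
  with that show thesis by blast
qed

lemma edge_cut_transfer:
  fixes X :: "'a mgraph" and Y :: "'b mgraph"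
  assumes "v' \<notin> B"
    and "\<And>F. F \<subseteq># edges Y \<Longrightarrow> \<not> connects (edges Y - F) v' B \<Longrightarrow>
           \<exists>F'. F' \<subseteq># edges X \<and> size F' \<le> size F \<and> \<not> connects (edges X - F') v A"
  shows "edge_cut X v A \<le> edge_cut Y v' B"
proof -
  obtain F where F: "F \<subseteq># edges Y" "size F = edge_cut Y v' B" "\<not> connects (edges Y - F) v' B"
    using edge_cut_attained[OF assms(1)] .
  then obtain F' where "F' \<subseteq># edges X" "size F' \<le> size F" "\<not> connects (edges X - F') v A"
    using assms(2) by blast
  with F(2) show ?thesis using edge_cut_le[of F' X v A] by simp
qed

lemma edge_cut_mono_target:
  assumes "A \<subseteq> B" and "v \<notin> B"
  shows "edge_cut G v A \<le> edge_cut G v B"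
  by (rule edge_cut_transfer[OF assms(2)]) (use assms(1) in \<open>auto simp: connects_def\<close>)

lemma edge_cut_subgraph:
  assumes "subgraph S G" and "v \<notin> B"
  shows "edge_cut S v B \<le> edge_cut G v B"
proof (rule edge_cut_transfer[OF assms(2)])
  fix F assume F: "F \<subseteq># edges G" "\<not> connects (edges G - F) v B"
  have "edges S - F \<inter># edges S \<subseteq># edges G - F"
    using assms(1) unfolding subgraph_def by (auto simp: subseteq_mset_def intro: diff_le_mono)
  with F(2) have "\<not> connects (edges S - F \<inter># edges S) v B" by (blast dest: connects_mono)
  then show "\<exists>F'. F' \<subseteq># edges S \<and> size F' \<le> size F \<and> \<not> connects (edges S - F') v B"
    by (intro exI[of _ "F \<inter># edges S"]) (simp add: size_mset_mono)
qed

lemma mset_subset_eq_diff_if_disjoint: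
  assumes "F \<subseteq># E" and "F \<inter># D = {#}"
  shows "F \<subseteq># E - D"
proof (rule mset_subset_eqI)
  fix a
  have "min (count F a) (count D a) = 0" using assms(2) by (metis count_empty count_inter_mset)
  then show "count F a \<le> count (E - D) a" using mset_subset_eq_count[OF assms(1), of a] by auto
qed

lemma mset_subset_eq_diff_swap:
  assumes "D \<subseteq># E" and "F \<subseteq># E - D"
  shows "D \<subseteq># E - F"
proof (rule mset_subset_eqI)
  fix a show "count D a \<le> count (E - F) a"
    using mset_subset_eq_count[OF assms(1), of a] mset_subset_eq_count[OF assms(2), of a] by simp
qed

lemma mset_diff_add_diff_commute:
  assumes "D \<subseteq># E" and "F \<subseteq># E - D"
  shows "E - D + U - F = E - F - D + U"
proof (rule multiset_eqI)
  fix a show "count (E - D + U - F) a = count (E - F - D + U) a"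
    using mset_subset_eq_count[OF assms(1), of a] mset_subset_eq_count[OF assms(2), of a] by simp
qed

lemma mset_diff_add_mono:
  assumes "F \<subseteq># E"
  shows "F - D + U \<subseteq># E - D + U"
proof (rule mset_subset_eqI)
  fix a show "count (F - D + U) a \<le> count (E - D + U) a"
    using mset_subset_eq_count[OF assms, of a] by simp
qed

lemma mset_diff_replaced_subseteq:
  assumes "D \<subseteq># E"
  shows "(E - D + U) - (F - D + U) \<subseteq># E - F"
proof (rule mset_subset_eqI)
  fix a show "count (E - D + U - (F - D + U)) a \<le> count (E - F) a"
    using mset_subset_eq_count[OF assms, of a] by simp
qed

lemma connects_lifted:
  assumes "{#{u, x}, {x, w}#} \<subseteq># E"
    and "connects (E - {#{u, x}, {x, w}#} + (if u = w then {#} else {#{u, w}#})) v B"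
  shows "connects E v B"
proof -
  let ?E' = "E - {#{u, x}, {x, w}#} + (if u = w then {#} else {#{u, w}#})"
  have ux: "adj E u x" "adj E x u" and xw: "adj E x w" "adj E w x"
    using assms(1) by (auto simp: adj_def insert_commute mset_subset_eqD)
  have step: "(adj E)\<^sup>*\<^sup>* a b" if "adj ?E' a b" for a b
  proof (cases "{a, b} \<in># E")
    case False
    with that have "{a, b} = {u, w}"
      unfolding adj_def by (auto split: if_splits dest: in_diffD)
    then have "a = u \<and> b = w \<or> a = w \<and> b = u" by (auto simp: doubleton_eq_iff)
    with ux xw show ?thesis by (meson converse_rtranclp_into_rtranclp r_into_rtranclp)
  qed (simp add: adj_def r_into_rtranclp)
  have "(adj E)\<^sup>*\<^sup>* v s" if "(adj ?E')\<^sup>*\<^sup>* v s" for s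
    using rtranclp_map[where h = "\<lambda>x. x", OF that step] .
  with assms(2) show ?thesis unfolding connects_def by blast
qed

lemma edge_cut_lift_step:
  assumes "lift_step G G'" and "v \<notin> B"
  shows "edge_cut G' v B \<le> edge_cut G v B"
proof (rule edge_cut_transfer[OF assms(2)])
  fix F assume F: "F \<subseteq># edges G" "\<not> connects (edges G - F) v B"
  obtain u x w where "{#{u, x}, {x, w}#} \<subseteq># edges G" and
    G': "edges G' = edges G - {#{u, x}, {x, w}#} + (if u = w then {#} else {#{u, w}#})"
    using assms(1) unfolding lift_step_def by auto
  moreover define D where "D = {#{u, x}, {x, w}#}"
  moreover define U :: "'a set multiset" where "U = (if u = w then {#} else {#{u, w}#})"
  ultimately have D: "D \<subseteq># edges G" and G': "edges G' = edges G - D + U" by simp_all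
  show "\<exists>F'. F' \<subseteq># edges G' \<and> size F' \<le> size F \<and> \<not> connects (edges G' - F') v B"
  proof (cases "F \<inter># D = {#}")
    case True
    with F(1) have FD: "F \<subseteq># edges G - D" by (rule mset_subset_eq_diff_if_disjoint)
    have "D \<subseteq># edges G - F" using D FD by (rule mset_subset_eq_diff_swap)
    then have "connects (edges G - F - D + U) v B \<Longrightarrow> connects (edges G - F) v B"
      unfolding D_def U_def by (rule connects_lifted)
    moreover have "edges G' - F = edges G - F - D + U"
      unfolding G' using D FD by (rule mset_diff_add_diff_commute)
    ultimately have "\<not> connects (edges G' - F) v B" using F(2) by metis
    moreover have "F \<subseteq># edges G'" using FD unfolding G' by (simp add: subset_mset.add_increasing2)
    ultimately show ?thesis by blast
  next
    case False
    have "0 < size (F \<inter># D)" "size (F \<inter># D) \<le> size F"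
      using False by (simp_all add: nonempty_has_size size_mset_mono)
    then have "size (F - D) < size F" by (simp add: size_Diff_subset_Int)
    moreover have "size U \<le> 1" by (simp add: U_def)
    ultimately have "size (F - D + U) \<le> size F" by simp
    moreover have "F - D + U \<subseteq># edges G'" unfolding G' using F(1) by (rule mset_diff_add_mono)
    moreover have "\<not> connects (edges G' - (F - D + U)) v B"
      using F(2) connects_mono[OF mset_diff_replaced_subseteq[OF D]] unfolding G' by blast
    ultimately show ?thesis by blast
  qed
qed

lemma lift_steps_verts: "lift_step\<^sup>*\<^sup>* S L \<Longrightarrow> verts L = verts S"
proof (induction rule: rtranclp_induct)
  case (step L L')
  from step(2) have "verts L' = verts L" unfolding lift_step_def by (elim exE conjE) simp
  with step(3) show ?case by simp
qed simp

lemma edge_cut_lift_steps: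
  assumes "lift_step\<^sup>*\<^sup>* S L" and "v \<notin> B"
  shows "edge_cut L v B \<le> edge_cut S v B"
  using assms(1)
proof induction
  case (step L L')
  then show ?case using edge_cut_lift_step[OF step(2) assms(2)] by linarith
qed simp

lemma mset_subset_eq_image_msetE:
  assumes "N \<subseteq># image_mset f M"
  obtains M' where "M' \<subseteq># M" and "image_mset f M' = N"
proof -
  have "image_mset f M = N + (image_mset f M - N)"
    using assms by (simp add: subset_mset.add_diff_inverse)
  then obtain M' M'' where "M = M' + M''" "N = image_mset f M'"
    by (blast dest: image_mset_eq_plusD)
  then show thesis using that[of M'] by simp
qed

lemma edge_cut_image_mset:
  assumes "image_mset (image f) (edges H) = edges L" and "f v \<notin> f ` A"
  shows "edge_cut H v A \<le> edge_cut L (f v) (f ` A)"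
proof (rule edge_cut_transfer[OF assms(2)])
  fix F assume F: "F \<subseteq># edges L" "\<not> connects (edges L - F) (f v) (f ` A)"
  obtain FH where FH: "FH \<subseteq># edges H" "image_mset (image f) FH = F"
    using F(1) unfolding assms(1)[symmetric] by (rule mset_subset_eq_image_msetE)
  have "image_mset (image f) (edges H - FH) = edges L - F"
    using FH by (simp add: image_mset_Diff assms(1))
  with F(2) have "\<not> connects (edges H - FH) v A" by (metis connects_image_mset)
  with FH show "\<exists>F'. F' \<subseteq># edges H \<and> size F' \<le> size F \<and> \<not> connects (edges H - F') v A"
    by auto
qed

lemma edge_adm_le:
  assumes "distinct vs" and "set vs = verts G"
    and "\<And>i. i < length vs \<Longrightarrow> edge_cut G (vs ! i) (set (take i vs)) \<le> k"
  shows "edge_adm G \<le> k"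
  unfolding edge_adm_def by (rule Least_le) (use assms in blast)

lemma edge_adm_attained:
  assumes "finite (verts G)"
  obtains vs where "distinct vs" "set vs = verts G"
    "\<And>i. i < length vs \<Longrightarrow> edge_cut G (vs ! i) (set (take i vs)) \<le> edge_adm G"
proof -
  obtain vs0 where vs0: "distinct vs0" "set vs0 = verts G"
    using finite_distinct_list[OF assms] by blast
  let ?bound = "\<Sum>i<length vs0. edge_cut G (vs0 ! i) (set (take i vs0))"
  have "\<forall>i < length vs0. edge_cut G (vs0 ! i) (set (take i vs0)) \<le> ?bound"
    by (auto intro: member_le_sum)
  with vs0 have "\<exists>k vs. distinct vs \<and> set vs = verts G \<and>
       (\<forall>i < length vs. edge_cut G (vs ! i) (set (take i vs)) \<le> k)" by blast
  then have "\<exists>vs. distinct vs \<and> set vs = verts G \<and>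
       (\<forall>i < length vs. edge_cut G (vs ! i) (set (take i vs)) \<le> edge_adm G)"
    unfolding edge_adm_def by (rule LeastI_ex)
  with that show thesis by blast
qed

lemma nth_filter_prefix:
  "i < length (filter P vs) \<Longrightarrow> \<exists>j < length vs. vs ! j = filter P vs ! i \<and>
     set (take i (filter P vs)) \<subseteq> set (take j vs)"
proof (induction vs arbitrary: i)
  case (Cons x xs)
  show ?case
  proof (cases "P x \<and> i = 0")
    case True
    then show ?thesis by (intro exI[of _ 0]) auto
  next
    case False
    with Cons.prems have "i - (if P x then 1 else 0) < length (filter P xs)"
      by (auto split: if_splits)
    from Cons.IH[OF this] obtain j where "j < length xs"
      "xs ! j = filter P xs ! (i - (if P x then 1 else 0))"
      "set (take (i - (if P x then 1 else 0)) (filter P xs)) \<subseteq> set (take j xs)" by blast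
    with False show ?thesis
      by (intro exI[of _ "Suc j"]) (cases i; auto intro: set_take_subset_set_take[THEN subsetD, rotated])
  qed
qed simp

lemma nth_notin_set_take: "distinct xs \<Longrightarrow> i < length xs \<Longrightarrow> xs ! i \<notin> set (take i xs)"
  by (metis Cons_nth_drop_Suc append_take_drop_id disjoint_iff distinct_append list.set_intros(1))

lemma edge_adm_le_embedding:
  assumes "finite (verts G)" and "inj_on f (verts H)" and "f ` verts H \<subseteq> verts G"
    and cut: "\<And>v A. v \<in> verts H \<Longrightarrow> A \<subseteq> verts H \<Longrightarrow> v \<notin> A \<Longrightarrow>
           edge_cut H v A \<le> edge_cut G (f v) (f ` A)"
  shows "edge_adm H \<le> edge_adm G"
proof -
  obtain vs where vs: "distinct vs" "set vs = verts G"
    "\<And>i. i < length vs \<Longrightarrow> edge_cut G (vs ! i) (set (take i vs)) \<le> edge_adm G"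
    using edge_adm_attained[OF assms(1)] by blast
  define ws where "ws = filter (\<lambda>y. y \<in> f ` verts H) vs"
  define hs where "hs = map (inv_into (verts H) f) ws"
  have ws: "distinct ws" "set ws = f ` verts H" using vs assms(3) by (auto simp: ws_def)
  have "map f hs = ws" unfolding hs_def map_map
    by (rule map_idI) (use ws(2) in \<open>auto simp: f_inv_into_f\<close>)
  with ws have hs: "distinct hs" "set hs = verts H" "map f hs = ws"
    using assms(2) by (auto simp: hs_def distinct_map inj_on_inv_into)
  show ?thesis
  proof (rule edge_adm_le[OF hs(1,2)])
    fix i assume i: "i < length hs"
    then have iws: "i < length ws" by (simp add: hs_def)
    obtain j where j: "j < length vs" "vs ! j = ws ! i" "set (take i ws) \<subseteq> set (take j vs)"
      using nth_filter_prefix[OF iws[unfolded ws_def]] unfolding ws_def by blast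
    have "edge_cut H (hs ! i) (set (take i hs)) \<le> edge_cut G (f (hs ! i)) (f ` set (take i hs))"
    proof (rule cut)
      show "hs ! i \<in> verts H" using nth_mem[OF i] hs(2) by simp
      show "set (take i hs) \<subseteq> verts H" using set_take_subset[of i hs] hs(2) by simp
      show "hs ! i \<notin> set (take i hs)" using hs(1) i by (rule nth_notin_set_take)
    qed
    also have "\<dots> = edge_cut G (ws ! i) (set (take i ws))"
      unfolding hs(3)[symmetric] using i by (simp add: take_map)
    also have "\<dots> \<le> edge_cut G (vs ! j) (set (take j vs))"
      unfolding j(2)[symmetric] using j(3) nth_notin_set_take[OF vs(1) j(1)]
      by (rule edge_cut_mono_target)
    also have "\<dots> \<le> edge_adm G" using vs(3)[OF j(1)] .
    finally show "edge_cut H (hs ! i) (set (take i hs)) \<le> edge_adm G" .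
  qed
qed

theorem mainTheorem11:
  fixes H :: "'b mgraph" and G :: "'a mgraph"
  assumes "wf_mgraph H" and "wf_mgraph G" and "immersion H G"
  shows "edge_adm H \<le> edge_adm G"
proof -
  obtain S L f where S: "subgraph S G" and SL: "lift_step\<^sup>*\<^sup>* S L"
    and f: "bij_betw f (verts H) (verts L)" "image_mset (image f) (edges H) = edges L"
    using assms(3) unfolding immersion_def mgraph_iso_def by blast
  have "verts L \<subseteq> verts G" using S lift_steps_verts[OF SL] by (simp add: subgraph_def)
  show ?thesis
  proof (rule edge_adm_le_embedding)
    show "finite (verts G)" using assms(2) by (simp add: wf_mgraph_def)
    show inj: "inj_on f (verts H)" and "f ` verts H \<subseteq> verts G"
      using f(1) \<open>verts L \<subseteq> verts G\<close> by (auto simp: bij_betw_def)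
    fix v A assume "v \<in> verts H" "A \<subseteq> verts H" "v \<notin> A"
    then have fvA: "f v \<notin> f ` A" by (simp add: inj_on_image_mem_iff[OF inj])
    have "edge_cut H v A \<le> edge_cut L (f v) (f ` A)" by (rule edge_cut_image_mset[OF f(2) fvA])
    also have "\<dots> \<le> edge_cut S (f v) (f ` A)" by (rule edge_cut_lift_steps[OF SL fvA])
    also have "\<dots> \<le> edge_cut G (f v) (f ` A)" by (rule edge_cut_subgraph[OF S fvA])
    finally show "edge_cut H v A \<le> edge_cut G (f v) (f ` A)" .
  qed
qed

end
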